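(* Let $(\mathbb S,+,\cdot)$ be an S-Field. Then $(\mathbb S_0,+,\cdot)$ (operations restricted to $\mathbb S_0$) forms a Field with Unity $1$, where $e=1$ is the Unity of $(\mathbb S,+,\cdot)$.
   Context: An S-Structure is a triple $(\mathbb S,+,\cdot)$ where $\mathbb S$ is a set and $+,\cdot$ are binary operations on $\mathbb S$ such that: $(\mathbb S,+)$ is a commutative group with identity $0$ (the inverse of $s$ is written $-s$, and $s-t:=s+(-t)$); $\mathbb S$ is closed under $\cdot$; and there exists $s\in\mathbb S$ with $0\cdot s\neq 0$ or $s\cdot 0\neq 0$. Multiplication binds tighter than addition. The structures considered come with a distinguished element of $\mathbb S$ denoted $1$. It is Commutative if $s\cdot t=t\cdot s$ for all $s,t$. For a Commutative S-Structure and $\alpha\in\mathbb S$, put $\mathbb S_\alpha=\{s\in\mathbb S:0\cdot s=s\cdot 0=\alpha\}$ and $\Lambda=\{\alpha\in\mathbb S:\mathbb S_\alpha\neq\emptyset\}$. Wheel Distributive: $s\cdot(t+r)+(s\cdot 0)=(s\cdot t)+(s\cdot r)$ for all $s,t,r\in\mathbb S$. S-Associative: for all $m,n\in\mathbb S_0$ and $s\in\mathbb S$, $m\cdot(n\cdot s)=(m\cdot n)\cdot s-([(m-1)\cdot(n-1)]\cdot(0\cdot s))$. Base: if $\mathbb S_0\neq\emptyset$ and $\alpha\in\Lambda$, $q\in\mathbb S_\alpha$ is a Base for $\mathbb S_\alpha$ if $q+\beta\in\mathbb S_\alpha$ for all $\beta\in\mathbb S_0$ and every $s\in\mathbb S_\alpha$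 equals $q+\beta$ for some $\beta\in\mathbb S_0$. Coordinated: $\mathbb S_0\neq\emptyset$ and every $\mathbb S_\alpha$ with $\alpha\in\Lambda$ has a Base. Standard Bases: a Coordinated Commutative S-Structure has Standard Bases if there is a specified element $q_0(1)\in\mathbb S_1$ which is a Base for $\mathbb S_1$, and for every $\alpha\in\Lambda$ the element $q_0(\alpha):=\alpha\cdot(q_0(1)+1)-1$ lies in $\mathbb S_\alpha$ and is a Base for $\mathbb S_\alpha$. An Essential S-Structure is an S-Structure that is Commutative, Wheel Distributive, S-Associative, has Standard Bases (in particular is Coordinated), satisfies $0,1\in\mathbb S_0$, and satisfies $\mathbb S_0=\{1\cdot x:x\in\mathbb S_0\}$. A Unity is an element $e\in\Lambda$ with $e\cdot s=s\cdot e=s$ for all $s\in\mathbb S$. Scalar Inverses: the structure has a Unity $e$ and for every $x\in\mathbb S_0$ with $x\neq 0$ there is $x^{-1}\in\mathbb S_0$ with $x\cdot x^{-1}=x^{-1}\cdot x=e$. An S-Ring is an Essential S-Structure with a Unity; an S-Field is an S-Ring with Scalar Inverses. *)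

theory Defs
  imports "HOL-Algebra.Ring"
begin

text \<open>An S-Structure is modelled on a whole HOL type 'a (the set S is UNIV),
with addition pl, negation neg, zero z, multiplication mul and the
distinguished element u.\<close>

definition S_structure ::
  "('a \<Rightarrow> 'a \<Rightarrow> 'a) \<Rightarrow> ('a \<Rightarrow> 'a) \<Rightarrow> 'a \<Rightarrow> ('a \<Rightarrow> 'a \<Rightarrow> 'a) \<Rightarrow> bool" where
  "S_structure pl neg z mul \<longleftrightarrow>
     (\<forall>a b c. pl (pl a b) c = pl a (pl b c)) \<and>
     (\<forall>a b. pl a b = pl b a) \<and>
     (\<forall>a. pl z a = a) \<and>
     (\<forall>a. pl a (neg a) = z) \<and>
     (\<exists>s. mul z s \<noteq> z \<or> mul s z \<noteq> z)"

definition S_commutative :: "('a \<Rightarrow> 'a \<Rightarrow> 'a) \<Rightarrow> bool" where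
  "S_commutative mul \<longleftrightarrow> (\<forall>s t. mul s t = mul t s)"

definition S_sub :: "('a \<Rightarrow> 'a \<Rightarrow> 'a) \<Rightarrow> ('a \<Rightarrow> 'a) \<Rightarrow> 'a \<Rightarrow> 'a \<Rightarrow> 'a" where
  "S_sub pl neg s t = pl s (neg t)"

definition S_alpha :: "'a \<Rightarrow> ('a \<Rightarrow> 'a \<Rightarrow> 'a) \<Rightarrow> 'a \<Rightarrow> 'a set" where
  "S_alpha z mul \<alpha> = {s. mul z s = \<alpha> \<and> mul s z = \<alpha>}"

definition S_Lambda :: "'a \<Rightarrow> ('a \<Rightarrow> 'a \<Rightarrow> 'a) \<Rightarrow> 'a set" where
  "S_Lambda z mul = {\<alpha>. S_alpha z mul \<alpha> \<noteq> {}}"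

definition wheel_distributive :: "('a \<Rightarrow> 'a \<Rightarrow> 'a) \<Rightarrow> 'a \<Rightarrow> ('a \<Rightarrow> 'a \<Rightarrow> 'a) \<Rightarrow> bool" where
  "wheel_distributive pl z mul \<longleftrightarrow>
     (\<forall>s t r. pl (mul s (pl t r)) (mul s z) = pl (mul s t) (mul s r))"

definition S_associative ::
  "('a \<Rightarrow> 'a \<Rightarrow> 'a) \<Rightarrow> ('a \<Rightarrow> 'a) \<Rightarrow> 'a \<Rightarrow> ('a \<Rightarrow> 'a \<Rightarrow> 'a) \<Rightarrow> 'a \<Rightarrow> bool" where
  "S_associative pl neg z mul u \<longleftrightarrow>
     (\<forall>m\<in>S_alpha z mul z. \<forall>n\<in>S_alpha z mul z. \<forall>s.
        mul m (mul n s) =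
        S_sub pl neg (mul (mul m n) s)
          (mul (mul (S_sub pl neg m u) (S_sub pl neg n u)) (mul z s)))"

definition is_base :: "('a \<Rightarrow> 'a \<Rightarrow> 'a) \<Rightarrow> 'a \<Rightarrow> ('a \<Rightarrow> 'a \<Rightarrow> 'a) \<Rightarrow> 'a \<Rightarrow> 'a \<Rightarrow> bool" where
  "is_base pl z mul \<alpha> q \<longleftrightarrow>
     S_alpha z mul z \<noteq> {} \<and> \<alpha> \<in> S_Lambda z mul \<and>
     q \<in> S_alpha z mul \<alpha> \<and>
     (\<forall>\<beta>\<in>S_alpha z mul z. pl q \<beta> \<in> S_alpha z mul \<alpha>) \<and>
     (\<forall>s\<in>S_alpha z mul \<alpha>. \<exists>\<beta>\<in>S_alpha z mul z. s = pl q \<beta>)"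

definition coordinated :: "('a \<Rightarrow> 'a \<Rightarrow> 'a) \<Rightarrow> 'a \<Rightarrow> ('a \<Rightarrow> 'a \<Rightarrow> 'a) \<Rightarrow> bool" where
  "coordinated pl z mul \<longleftrightarrow>
     S_alpha z mul z \<noteq> {} \<and> (\<forall>\<alpha>\<in>S_Lambda z mul. \<exists>q. is_base pl z mul \<alpha> q)"

text \<open>Standard Bases: the specified element q0(1) is existentially quantified.\<close>
definition standard_bases ::
  "('a \<Rightarrow> 'a \<Rightarrow> 'a) \<Rightarrow> ('a \<Rightarrow> 'a) \<Rightarrow> 'a \<Rightarrow> ('a \<Rightarrow> 'a \<Rightarrow> 'a) \<Rightarrow> 'a \<Rightarrow> bool" where
  "standard_bases pl neg z mul u \<longleftrightarrow>
     coordinated pl z mul \<and> S_commutative mul \<and>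
     (\<exists>q1. q1 \<in> S_alpha z mul u \<and> is_base pl z mul u q1 \<and>
        (\<forall>\<alpha>\<in>S_Lambda z mul.
           S_sub pl neg (mul \<alpha> (pl q1 u)) u \<in> S_alpha z mul \<alpha> \<and>
           is_base pl z mul \<alpha> (S_sub pl neg (mul \<alpha> (pl q1 u)) u)))"

definition essential_S_structure ::
  "('a \<Rightarrow> 'a \<Rightarrow> 'a) \<Rightarrow> ('a \<Rightarrow> 'a) \<Rightarrow> 'a \<Rightarrow> ('a \<Rightarrow> 'a \<Rightarrow> 'a) \<Rightarrow> 'a \<Rightarrow> bool" where
  "essential_S_structure pl neg z mul u \<longleftrightarrow>
     S_structure pl neg z mul \<and>
     S_commutative mul \<and>
     wheel_distributive pl z mul \<and>
     S_associative pl neg z mul u \<and>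
     standard_bases pl neg z mul u \<and>
     z \<in> S_alpha z mul z \<and> u \<in> S_alpha z mul z \<and>
     S_alpha z mul z = {mul u x | x. x \<in> S_alpha z mul z}"

definition is_unity :: "'a \<Rightarrow> ('a \<Rightarrow> 'a \<Rightarrow> 'a) \<Rightarrow> 'a \<Rightarrow> bool" where
  "is_unity z mul e \<longleftrightarrow> e \<in> S_Lambda z mul \<and> (\<forall>s. mul e s = s \<and> mul s e = s)"

definition S_ring ::
  "('a \<Rightarrow> 'a \<Rightarrow> 'a) \<Rightarrow> ('a \<Rightarrow> 'a) \<Rightarrow> 'a \<Rightarrow> ('a \<Rightarrow> 'a \<Rightarrow> 'a) \<Rightarrow> 'a \<Rightarrow> bool" where
  "S_ring pl neg z mul u \<longleftrightarrow>
     essential_S_structure pl neg z mul u \<and> (\<exists>e. is_unity z mul e)"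

definition S_field ::
  "('a \<Rightarrow> 'a \<Rightarrow> 'a) \<Rightarrow> ('a \<Rightarrow> 'a) \<Rightarrow> 'a \<Rightarrow> ('a \<Rightarrow> 'a \<Rightarrow> 'a) \<Rightarrow> 'a \<Rightarrow> bool" where
  "S_field pl neg z mul u \<longleftrightarrow>
     S_ring pl neg z mul u \<and>
     (\<exists>e. is_unity z mul e \<and>
        (\<forall>x\<in>S_alpha z mul z. x \<noteq> z \<longrightarrow>
           (\<exists>y\<in>S_alpha z mul z. mul x y = e \<and> mul y x = e)))"

definition S0_structure ::
  "('a \<Rightarrow> 'a \<Rightarrow> 'a) \<Rightarrow> 'a \<Rightarrow> ('a \<Rightarrow> 'a \<Rightarrow> 'a) \<Rightarrow> 'a \<Rightarrow> 'a ring" where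
  "S0_structure pl z mul u =
     \<lparr>carrier = S_alpha z mul z, monoid.mult = mul, one = u,
      ring.zero = z, add = pl\<rparr>"

end

theory Submission
  imports Defs
begin

text \<open>Restricted to \<open>S\<^sub>0\<close>, every correction term in the axioms vanishes: wheel
distributivity becomes ordinary distributivity because \<open>s \<cdot> 0 = 0\<close> there, and the
defect term of S-associativity contains a factor \<open>(m - 1)(n - 1) \<cdot> (0 \<cdot> s)\<close> that is \<open>0\<close>
once \<open>S\<^sub>0\<close> is known to be closed under products. Closure under products itself is read
off S-associativity applied to \<open>(a + 1)(b + 1)\<close> and the unity. The standard base of
\<open>S\<^sub>e\<close> forces the unity \<open>e\<close> to be \<open>1\<close>, and \<open>1 \<noteq> 0\<close> because otherwise every element
would vanish, contradicting the non-degeneracy axiom of S-structures.\<close>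

locale essential_S =
  fixes pl :: "'a \<Rightarrow> 'a \<Rightarrow> 'a" and neg :: "'a \<Rightarrow> 'a" and z :: 'a
    and mul :: "'a \<Rightarrow> 'a \<Rightarrow> 'a" and u :: 'a
  assumes essential: "essential_S_structure pl neg z mul u"
begin

abbreviation S0 :: "'a set" where "S0 \<equiv> S_alpha z mul z"

lemma S_structure: "S_structure pl neg z mul"
  using essential unfolding essential_S_structure_def by blast

lemma add_assoc: "pl (pl a b) c = pl a (pl b c)"
  and add_commute: "pl a b = pl b a"
  and zero_add: "pl z a = a"
  and add_neg: "pl a (neg a) = z"
  using S_structure unfolding S_structure_def by blast+

lemma add_zero: "pl a z = a"
  using zero_add add_commute by metis

lemma add_left_cancel: "pl a b = pl a c \<Longrightarrow> b = c"
  by (metis add_assoc add_commute add_neg zero_add)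

lemma neg_zero: "neg z = z"
  using add_neg zero_add by metis

lemma mul_commute: "mul s t = mul t s"
  using essential unfolding essential_S_structure_def S_commutative_def by blast

lemma wheel_distrib: "pl (mul s (pl t r)) (mul s z) = pl (mul s t) (mul s r)"
  using essential unfolding essential_S_structure_def wheel_distributive_def by blast

lemma S_assoc:
  assumes "m \<in> S0" and "n \<in> S0"
  shows "mul m (mul n s) =
    pl (mul (mul m n) s) (neg (mul (mul (pl m (neg u)) (pl n (neg u))) (mul z s)))"
  using essential assms
  unfolding essential_S_structure_def S_associative_def S_sub_def by blast

lemma zero_in_S0: "z \<in> S0" and one_in_S0: "u \<in> S0"
  using essential unfolding essential_S_structure_def by blast+

lemma S0_iff: "x \<in> S0 \<longleftrightarrow> mul z x = z"
  unfolding S_alpha_def using mul_commute by auto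

lemma mul_zero_S0: "x \<in> S0 \<Longrightarrow> mul x z = z"
  using S0_iff mul_commute by metis

lemma S0_add_closed:
  assumes "a \<in> S0" and "b \<in> S0"
  shows "pl a b \<in> S0"
proof -
  have "pl (mul z (pl a b)) (mul z z) = pl z z"
    using wheel_distrib assms S0_iff by metis
  then show ?thesis
    using S0_iff zero_in_S0 add_zero by metis
qed

lemma S0_neg_closed:
  assumes "a \<in> S0"
  shows "neg a \<in> S0"
proof -
  have "pl (mul z (pl a (neg a))) (mul z z) = pl (mul z a) (mul z (neg a))"
    using wheel_distrib by metis
  then have "pl z z = pl z (mul z (neg a))"
    using assms S0_iff zero_in_S0 add_neg by metis
  then show ?thesis
    using S0_iff add_left_cancel by metis
qed

lemma S0_distrib:
  assumes "c \<in> S0"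
  shows "mul (pl a b) c = pl (mul a c) (mul b c)"
  using wheel_distrib[of c a b] assms mul_zero_S0 add_zero mul_commute by metis

end

locale S_ring_with_unity = essential_S +
  fixes e :: 'a
  assumes unity: "is_unity z mul e"
begin

lemma unity_mult: "mul e s = s" "mul s e = s"
  using unity unfolding is_unity_def by blast+

lemma unity_eq_one: "e = u"
proof -
  obtain q1 where q1: "q1 \<in> S_alpha z mul u"
    and standard: "\<forall>\<alpha>\<in>S_Lambda z mul. S_sub pl neg (mul \<alpha> (pl q1 u)) u \<in> S_alpha z mul \<alpha>"
    using essential unfolding essential_S_structure_def standard_bases_def by blast
  have "S_sub pl neg (mul e (pl q1 u)) u = q1"
    unfolding S_sub_def using unity_mult add_assoc add_neg add_zero by metis
  then have "q1 \<in> S_alpha z mul e"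
    using standard unity unfolding is_unity_def by metis
  with q1 show ?thesis
    unfolding S_alpha_def by auto
qed

lemma one_mult: "mul u s = s"
  using unity_mult unity_eq_one by simp

lemma S0_mult_zero:
  assumes a: "a \<in> S0" and b: "b \<in> S0"
  shows "mul (mul a b) z = z"
proof -
  have "pl a u \<in> S0" "pl b u \<in> S0"
    using a b one_in_S0 S0_add_closed by auto
  from S_assoc[OF this, of u]
  have "mul (pl a u) (pl b u) = pl (mul (pl a u) (pl b u)) (neg (mul (mul a b) z))"
    using one_mult mul_commute add_assoc add_neg add_zero zero_in_S0 S0_iff by metis
  then have "neg (mul (mul a b) z) = z"
    using add_left_cancel add_zero by metis
  then show ?thesis
    using add_neg add_zero by metis
qed

lemma S0_mult_closed: "a \<in> S0 \<Longrightarrow> b \<in> S0 \<Longrightarrow> mul a b \<in> S0"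
  using S0_mult_zero S0_iff mul_commute by metis

lemma S0_mult_assoc:
  assumes "a \<in> S0" and "b \<in> S0" and c: "c \<in> S0"
  shows "mul (mul a b) c = mul a (mul b c)"
proof -
  have "mul (mul (pl a (neg u)) (pl b (neg u))) z = z"
    using assms S0_mult_zero S0_add_closed S0_neg_closed one_in_S0 by metis
  then show ?thesis
    using S_assoc[OF assms(1,2)] c S0_iff neg_zero add_zero by metis
qed

lemma one_neq_zero: "u \<noteq> z"
proof
  assume uz: "u = z"
  have "s = z" for s
  proof -
    have "s = pl s (neg (mul z s))"
      using S_assoc[OF zero_in_S0 zero_in_S0, of s] uz one_mult neg_zero zero_add
      by metis
    then show ?thesis
      using uz one_mult add_neg by metis
  qed
  then show False
    using S_structure unfolding S_structure_def by metis
qed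

lemma cring_S0: "cring (S0_structure pl z mul u)"
proof (rule cringI)
  show "abelian_group (S0_structure pl z mul u)"
  proof (rule abelian_groupI, simp_all add: S0_structure_def)
    show "\<And>x. x \<in> S0 \<Longrightarrow> \<exists>y\<in>S0. pl y x = z"
      using S0_neg_closed add_neg add_commute by metis
  qed (auto intro: S0_add_closed zero_in_S0 add_assoc add_commute zero_add)
  show "comm_monoid (S0_structure pl z mul u)"
    by (rule comm_monoidI, simp_all add: S0_structure_def)
      (auto intro: S0_mult_closed one_in_S0 S0_mult_assoc one_mult mul_commute)
qed (simp add: S0_structure_def S0_distrib)

end

theorem theorem3p3p1:
  fixes pl :: "'a \<Rightarrow> 'a \<Rightarrow> 'a" and neg :: "'a \<Rightarrow> 'a" and z :: 'a
    and mul :: "'a \<Rightarrow> 'a \<Rightarrow> 'a" and u :: 'a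
  assumes "S_field pl neg z mul u"
  shows "field (S0_structure pl z mul u) \<and> is_unity z mul u"
proof -
  obtain e where unity: "is_unity z mul e"
    and inverses: "\<forall>x\<in>S_alpha z mul z. x \<noteq> z \<longrightarrow> (\<exists>y\<in>S_alpha z mul z. mul x y = e)"
    using assms unfolding S_field_def by blast
  interpret S_ring_with_unity pl neg z mul u e
    using assms unity by unfold_locales (simp add: S_field_def S_ring_def)
  have "field (S0_structure pl z mul u)"
    by (rule cring.cring_fieldI2[OF cring_S0])
      (use one_neq_zero inverses unity_eq_one in \<open>simp_all add: S0_structure_def\<close>)
  with unity unity_eq_one show ?thesis by simp
qed

end
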